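(* There is a constant $C(\mathcal{X})<\infty$ such that for every $\rho_A\in\mathcal{P}(\mathcal{X})$ there exists a trajectory $(\rho,m)\in\mathcal{CE}(\rho_A,\mathbb{1})$ with continuous $\rho$ and $\mathcal{A}(\rho,m)\le C(\mathcal{X})$, such that moreover for every $h=1/N$, $N\in\mathbb{N}$, one has $(\mathcal{I}_h\rho,\mathrm{avg}_h m)\in\mathcal{CE}_h(\rho_A,\mathbb{1})$ and $\mathcal{A}_h(\mathcal{I}_h\rho,\mathrm{avg}_h m)\le C(\mathcal{X})$. Here $\mathbb{1}\in\mathcal{P}(\mathcal{X})$ is the uniform density $\mathbb{1}(x)=1$.
   Context: Setting: $\mathcal{X}$ finite, $Q:\mathcal{X}\times\mathcal{X}\to[0,\infty)$ with $Q(x,x)=0$, irreducible, reversible with respect to its stationary distribution $\pi>0$, $\sum\pi=1$ ($\pi(x)Q(x,y)=\pi(y)Q(y,x)$). $\mathcal{P}(\mathcal{X})=\{\rho\ge0:\sum_x\pi(x)\rho(x)=1\}$. $\langle\phi,\psi\rangle_\pi=\sum_x\phi\psi\pi$, $\langle\Phi,\Psi\rangle_Q=\frac12\sum_{x,y}\Phi\Psi Q(x,y)\pi(x)$, $(\nabla_{\mathcal{X}}\psi)(x,y)=\psi(x)-\psi(y)$, $(\mathrm{div}_{\mathcal{X}}\Psi)(x)=\frac12\sum_yQ(x,y)(\Psi(y,x)-\Psi(x,y))$. $\theta:[0,\infty)^2\to[0,\infty)$ is continuous, concave, 1-homogeneous, symmetric, $C^\infty$ on $(0,\infty)^2$, $\theta(0,s)=\theta(s,0)=0$,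 $\theta(s,s)=s$, $\theta>0$ on $(0,\infty)^2$, nondecreasing in each argument; $\theta=-\infty$ if an argument is negative. $\alpha(s,t,m)=m^2/\theta(s,t)$ if $\theta(s,t)>0$, $0$ if $\theta(s,t)=0=m$, $+\infty$ otherwise. $\mathcal{A}(\rho,m)=\frac12\int_0^1\sum_{x,y}\alpha(\rho(t,x),\rho(t,y),m(t,x,y))Q(x,y)\pi(x)\,dt$. $\mathcal{CE}(\rho_A,\rho_B)$: measurable pairs $(\rho,m)$ with $\int_0^1\langle\partial_t\varphi,\rho\rangle_\pi+\langle\nabla_{\mathcal{X}}\varphi,m\rangle_Q\,dt=\langle\varphi(1),\rho_B\rangle_\pi-\langle\varphi(0),\rho_A\rangle_\pi$ for all $\varphi\in C^1([0,1],\mathbb{R}^{\mathcal{X}})$. Time discretization: $N\in\mathbb{N}$, $h=1/N$, $t_i=ih$, $I_i=[t_i,t_{i+1})$. $V^1_{n,h}$: continuous $\psi:[0,1]\to\mathbb{R}^{\mathcal{X}}$ affine on each $I_i$; $V^0_{n,h}$, $V^0_{e,h}$: functions $[0,1]\to\mathbb{R}^{\mathcal{X}}$ resp. $\mathbb{R}^{\mathcal{X}\times\mathcal{X}}$ constant on each $I_i$ (value denoted $\psi(t_i)$). For $\psi\in V^1_{n,h}$, $(\partial_t\psi)(t_i)=(\psi(t_{i+1})-\psi(t_i))/h$. $\mathcal{CE}_h(\rho_A,\rho_B)$ is the set of $(\rho_h,m_h)\in V^1_{n,h}\times V^0_{e,h}$ with $\rho_h(t_0)=\rho_A$, $\rho_h(t_N)=\rho_B$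 and $\partial_t\rho_h(t_i)+\mathrm{div}_{\mathcal{X}}m_h(t_i)=0$ for $i=0,\dots,N-1$. $\mathrm{avg}_h$ maps a (vector-valued) measure or integrable function on $[0,1]$ to the element of $V^0_{n,h}$ (resp. $V^0_{e,h}$) whose value on $I_i$ is its average over $I_i$ (so $(\mathrm{avg}_h\psi)(t_i)=\frac12(\psi(t_i)+\psi(t_{i+1}))$ for $\psi\in V^1_{n,h}$). $\mathcal{A}_h(\rho,m)=\mathcal{A}(\mathrm{avg}_h\rho,\mathrm{avg}_hm)$. $\mathcal{I}_h:C^0([0,1],\mathbb{R}^{\mathcal{X}})\to V^1_{n,h}$ is Lagrange interpolation: $(\mathcal{I}_h\rho)(t_i)=\rho(t_i)$, $i=0,\dots,N$. *)

theory Defs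
  imports "HOL-Analysis.Analysis"
begin

fun Ck_on :: "nat \<Rightarrow> (real \<times> real \<Rightarrow> real) \<Rightarrow> (real \<times> real) set \<Rightarrow> bool" where
  "Ck_on 0 f S = continuous_on S f"
| "Ck_on (Suc k) f S =
     (f differentiable_on S \<and> (\<forall>v. Ck_on k (\<lambda>p. frechet_derivative f (at p) v) S))"

definition Cinf_on :: "(real \<times> real \<Rightarrow> real) \<Rightarrow> (real \<times> real) set \<Rightarrow> bool" where
  "Cinf_on f S \<longleftrightarrow> (\<forall>k. Ck_on k f S)"

definition markov_setting :: "('x::finite \<Rightarrow> 'x \<Rightarrow> real) \<Rightarrow> ('x \<Rightarrow> real) \<Rightarrow> bool" where
  "markov_setting Q \<pi> \<longleftrightarrow>
     (\<forall>x y. Q x y \<ge> 0) \<and> (\<forall>x. Q x x = 0) \<and>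
     (\<forall>x y. (x, y) \<in> {(a, b). Q a b > 0}\<^sup>*) \<and>
     (\<forall>x. \<pi> x > 0) \<and> (\<Sum>x\<in>UNIV. \<pi> x) = 1 \<and>
     (\<forall>y. (\<Sum>x\<in>UNIV. \<pi> x * Q x y) = \<pi> y * (\<Sum>z\<in>UNIV. Q y z)) \<and>
     (\<forall>x y. \<pi> x * Q x y = \<pi> y * Q y x)"

text \<open>Admissible mean theta (its values at negative arguments are irrelevant:
  they are treated as -infinity in the definition of alpha below).\<close>
definition admissible_theta :: "(real \<Rightarrow> real \<Rightarrow> real) \<Rightarrow> bool" where
  "admissible_theta \<theta> \<longleftrightarrow>
     continuous_on ({0..} \<times> {0..}) (\<lambda>(s, t). \<theta> s t) \<and>
     concave_on ({0..} \<times> {0..}) (\<lambda>(s, t). \<theta> s t) \<and>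
     (\<forall>c s t. c > 0 \<longrightarrow> s \<ge> 0 \<longrightarrow> t \<ge> 0 \<longrightarrow> \<theta> (c * s) (c * t) = c * \<theta> s t) \<and>
     (\<forall>s t. s \<ge> 0 \<longrightarrow> t \<ge> 0 \<longrightarrow> \<theta> s t = \<theta> t s) \<and>
     Cinf_on (\<lambda>(s, t). \<theta> s t) ({0<..} \<times> {0<..}) \<and>
     (\<forall>s. s \<ge> 0 \<longrightarrow> \<theta> 0 s = 0 \<and> \<theta> s 0 = 0) \<and>
     (\<forall>s. s \<ge> 0 \<longrightarrow> \<theta> s s = s) \<and>
     (\<forall>s t. s > 0 \<longrightarrow> t > 0 \<longrightarrow> \<theta> s t > 0) \<and>
     (\<forall>s s' t. 0 \<le> s \<longrightarrow> s \<le> s' \<longrightarrow> 0 \<le> t \<longrightarrow> \<theta> s t \<le> \<theta> s' t \<and> \<theta> t s \<le> \<theta> t s')"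

definition alpha :: "(real \<Rightarrow> real \<Rightarrow> real) \<Rightarrow> real \<Rightarrow> real \<Rightarrow> real \<Rightarrow> ennreal" where
  "alpha \<theta> s t m =
     (if s \<ge> 0 \<and> t \<ge> 0 \<and> \<theta> s t > 0 then ennreal (m\<^sup>2 / \<theta> s t)
      else if s \<ge> 0 \<and> t \<ge> 0 \<and> \<theta> s t = 0 \<and> m = 0 then 0
      else \<infinity>)"

definition in_P :: "('x::finite \<Rightarrow> real) \<Rightarrow> ('x \<Rightarrow> real) \<Rightarrow> bool" where
  "in_P \<pi> \<rho> \<longleftrightarrow> (\<forall>x. \<rho> x \<ge> 0) \<and> (\<Sum>x\<in>UNIV. \<pi> x * \<rho> x) = 1"

definition one_dens :: "'x \<Rightarrow> real" where
  "one_dens = (\<lambda>x. 1)"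

definition ip_pi :: "('x::finite \<Rightarrow> real) \<Rightarrow> ('x \<Rightarrow> real) \<Rightarrow> ('x \<Rightarrow> real) \<Rightarrow> real" where
  "ip_pi \<pi> \<phi> \<psi> = (\<Sum>x\<in>UNIV. \<phi> x * \<psi> x * \<pi> x)"

definition ip_Q :: "('x::finite \<Rightarrow> 'x \<Rightarrow> real) \<Rightarrow> ('x \<Rightarrow> real)
    \<Rightarrow> ('x \<Rightarrow> 'x \<Rightarrow> real) \<Rightarrow> ('x \<Rightarrow> 'x \<Rightarrow> real) \<Rightarrow> real" where
  "ip_Q Q \<pi> \<Phi> \<Psi> = (1/2) * (\<Sum>x\<in>UNIV. \<Sum>y\<in>UNIV. \<Phi> x y * \<Psi> x y * Q x y * \<pi> x)"

definition grad :: "('x \<Rightarrow> real) \<Rightarrow> 'x \<Rightarrow> 'x \<Rightarrow> real" where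
  "grad \<psi> x y = \<psi> x - \<psi> y"

definition dv :: "('x::finite \<Rightarrow> 'x \<Rightarrow> real) \<Rightarrow> ('x \<Rightarrow> 'x \<Rightarrow> real) \<Rightarrow> 'x \<Rightarrow> real" where
  "dv Q \<Psi> x = (1/2) * (\<Sum>y\<in>UNIV. Q x y * (\<Psi> y x - \<Psi> x y))"

definition action :: "('x::finite \<Rightarrow> 'x \<Rightarrow> real) \<Rightarrow> ('x \<Rightarrow> real) \<Rightarrow> (real \<Rightarrow> real \<Rightarrow> real)
    \<Rightarrow> (real \<Rightarrow> 'x \<Rightarrow> real) \<Rightarrow> (real \<Rightarrow> 'x \<Rightarrow> 'x \<Rightarrow> real) \<Rightarrow> ennreal" where
  "action Q \<pi> \<theta> \<rho> m =
     ennreal (1/2) * (\<integral>\<^sup>+ t \<in> {0..1}.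
        (\<Sum>x\<in>UNIV. \<Sum>y\<in>UNIV. alpha \<theta> (\<rho> t x) (\<rho> t y) (m t x y) * ennreal (Q x y * \<pi> x)) \<partial>lborel)"

definition C1_test :: "(real \<Rightarrow> 'x \<Rightarrow> real) \<Rightarrow> (real \<Rightarrow> 'x \<Rightarrow> real) \<Rightarrow> bool" where
  "C1_test \<phi> \<phi>' \<longleftrightarrow>
     (\<forall>x. (\<forall>t\<in>{0..1}. ((\<lambda>s. \<phi> s x) has_real_derivative \<phi>' t x) (at t within {0..1}))
        \<and> continuous_on {0..1} (\<lambda>t. \<phi>' t x))"

definition in_CE :: "('x::finite \<Rightarrow> 'x \<Rightarrow> real) \<Rightarrow> ('x \<Rightarrow> real) \<Rightarrow> ('x \<Rightarrow> real) \<Rightarrow> ('x \<Rightarrow> real)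
    \<Rightarrow> (real \<Rightarrow> 'x \<Rightarrow> real) \<Rightarrow> (real \<Rightarrow> 'x \<Rightarrow> 'x \<Rightarrow> real) \<Rightarrow> bool" where
  "in_CE Q \<pi> \<rho>A \<rho>B \<rho> m \<longleftrightarrow>
     (\<forall>x. set_borel_measurable lborel {0..1} (\<lambda>t. \<rho> t x)) \<and>
     (\<forall>x y. set_borel_measurable lborel {0..1} (\<lambda>t. m t x y)) \<and>
     (\<forall>\<phi> \<phi>'. C1_test \<phi> \<phi>' \<longrightarrow>
        set_integrable lborel {0..1}
          (\<lambda>t. ip_pi \<pi> (\<phi>' t) (\<rho> t) + ip_Q Q \<pi> (grad (\<phi> t)) (m t)) \<and>
        (LINT t:{0..1}|lborel. ip_pi \<pi> (\<phi>' t) (\<rho> t) + ip_Q Q \<pi> (grad (\<phi> t)) (m t))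
          = ip_pi \<pi> (\<phi> 1) \<rho>B - ip_pi \<pi> (\<phi> 0) \<rho>A)"

definition node :: "nat \<Rightarrow> nat \<Rightarrow> real" where
  "node N i = real i / real N"

definition cell :: "nat \<Rightarrow> nat \<Rightarrow> real set" where
  "cell N i = {node N i ..< node N (Suc i)}"

text \<open>Index i of the interval I_i containing t (t = 1 is assigned to the last interval).\<close>
definition cell_idx :: "nat \<Rightarrow> real \<Rightarrow> nat" where
  "cell_idx N t = (if t * real N \<ge> real N then N - 1 else nat \<lfloor>t * real N\<rfloor>)"

definition V1n :: "nat \<Rightarrow> (real \<Rightarrow> 'x \<Rightarrow> real) \<Rightarrow> bool" where
  "V1n N \<psi> \<longleftrightarrow> (\<forall>x. continuous_on {0..1} (\<lambda>t. \<psi> t x)) \<and>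
     (\<forall>i<N. \<forall>x. \<exists>a b. \<forall>t\<in>cell N i. \<psi> t x = a + b * t)"

definition V0e :: "nat \<Rightarrow> (real \<Rightarrow> 'x \<Rightarrow> 'x \<Rightarrow> real) \<Rightarrow> bool" where
  "V0e N \<Psi> \<longleftrightarrow> (\<forall>i<N. \<forall>t\<in>cell N i. \<Psi> t = \<Psi> (node N i))"

definition in_CEh :: "('x::finite \<Rightarrow> 'x \<Rightarrow> real) \<Rightarrow> nat \<Rightarrow> ('x \<Rightarrow> real) \<Rightarrow> ('x \<Rightarrow> real)
    \<Rightarrow> (real \<Rightarrow> 'x \<Rightarrow> real) \<Rightarrow> (real \<Rightarrow> 'x \<Rightarrow> 'x \<Rightarrow> real) \<Rightarrow> bool" where
  "in_CEh Q N \<rho>A \<rho>B \<rho>h mh \<longleftrightarrow>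
     V1n N \<rho>h \<and> V0e N mh \<and> \<rho>h (node N 0) = \<rho>A \<and> \<rho>h (node N N) = \<rho>B \<and>
     (\<forall>i<N. \<forall>x. (\<rho>h (node N (Suc i)) x - \<rho>h (node N i) x) / (1 / real N)
                 + dv Q (mh (node N i)) x = 0)"

definition avg1 :: "nat \<Rightarrow> (real \<Rightarrow> real) \<Rightarrow> real \<Rightarrow> real" where
  "avg1 N f t = (LINT s:cell N (cell_idx N t)|lborel. f s) / (1 / real N)"

definition avg_n :: "nat \<Rightarrow> (real \<Rightarrow> 'x \<Rightarrow> real) \<Rightarrow> real \<Rightarrow> 'x \<Rightarrow> real" where
  "avg_n N \<rho> = (\<lambda>t x. avg1 N (\<lambda>s. \<rho> s x) t)"

definition avg_e :: "nat \<Rightarrow> (real \<Rightarrow> 'x \<Rightarrow> 'x \<Rightarrow> real) \<Rightarrow> real \<Rightarrow> 'x \<Rightarrow> 'x \<Rightarrow> real" where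
  "avg_e N m = (\<lambda>t x y. avg1 N (\<lambda>s. m s x y) t)"

definition action_h :: "('x::finite \<Rightarrow> 'x \<Rightarrow> real) \<Rightarrow> ('x \<Rightarrow> real) \<Rightarrow> (real \<Rightarrow> real \<Rightarrow> real) \<Rightarrow> nat
    \<Rightarrow> (real \<Rightarrow> 'x \<Rightarrow> real) \<Rightarrow> (real \<Rightarrow> 'x \<Rightarrow> 'x \<Rightarrow> real) \<Rightarrow> ennreal" where
  "action_h Q \<pi> \<theta> N \<rho> m = action Q \<pi> \<theta> (avg_n N \<rho>) (avg_e N m)"

definition interp :: "nat \<Rightarrow> (real \<Rightarrow> 'x \<Rightarrow> real) \<Rightarrow> real \<Rightarrow> 'x \<Rightarrow> real" where
  "interp N \<rho> = (\<lambda>t x. let i = cell_idx N t; s = t * real N - real i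
                       in (1 - s) * \<rho> (node N i) x + s * \<rho> (node N (Suc i)) x)"

end

theory Submission
  imports Defs
begin

(* The curve rho(t) = rhoA + t^2 (1 - rhoA) is driven by the flux m(t) = 2 t m0 with div m0 = rhoA - 1.
   Irreducibility lets one move unit mass between any two states, and rhoA - 1 is a combination of
   such transfers with coefficients in [0, 1], so m0 is bounded uniformly in rhoA.  Since
   rho(t) >= t^2 and |m(t)| <= 2 t B, the action density m^2 / theta(rho, rho) stays below 4 B^2.
   After time discretisation the averaged flux on a cell [a, b] is (a + b) m0 and the averaged
   density is at least (a^2 + b^2) / 2 >= (a + b)^2 / 4, giving the same bound; the discrete
   continuity equation holds exactly because (b^2 - a^2) / (b - a) = a + b. *)

lemma dv_zero: "dv Q (\<lambda>x y. 0) = (\<lambda>x. 0)"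
  unfolding dv_def by simp

lemma dv_add: "dv Q (\<lambda>x y. A x y + B x y) = (\<lambda>x. dv Q A x + dv Q B x)"
  unfolding dv_def by (auto simp: algebra_simps sum.distrib[symmetric])

lemma dv_cmult: "dv Q (\<lambda>x y. c * A x y) = (\<lambda>x. c * dv Q A x)"
  unfolding dv_def by (auto simp: algebra_simps sum_distrib_left)

lemma dv_sum: "finite S \<Longrightarrow> dv Q (\<lambda>x y. \<Sum>i\<in>S. A i x y) = (\<lambda>x. \<Sum>i\<in>S. dv Q (A i) x)"
  by (induction S rule: finite_induct) (simp_all add: dv_zero dv_add)

lemma ip_Q_grad:
  fixes Q :: "'x::finite \<Rightarrow> 'x \<Rightarrow> real"
  assumes rev: "\<And>x y. \<pi> x * Q x y = \<pi> y * Q y x"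
  shows "ip_Q Q \<pi> (grad \<phi>) M = - ip_pi \<pi> \<phi> (dv Q M)"
proof -
  have swap: "(\<Sum>x\<in>UNIV. \<Sum>y\<in>UNIV. \<phi> y * M x y * Q x y * \<pi> x)
      = (\<Sum>x\<in>UNIV. \<Sum>y\<in>UNIV. \<phi> x * M y x * Q x y * \<pi> x)"
    by (subst sum.swap) (intro sum.cong refl, metis rev mult.commute mult.assoc)
  have "ip_Q Q \<pi> (grad \<phi>) M = (1/2) * ((\<Sum>x\<in>UNIV. \<Sum>y\<in>UNIV. \<phi> x * M x y * Q x y * \<pi> x)
      - (\<Sum>x\<in>UNIV. \<Sum>y\<in>UNIV. \<phi> y * M x y * Q x y * \<pi> x))"
    unfolding ip_Q_def grad_def by (simp add: algebra_simps sum_subtractf)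
  also have "\<dots> = - ip_pi \<pi> \<phi> (dv Q M)"
    unfolding swap ip_pi_def dv_def
    by (simp add: algebra_simps sum_subtractf sum_distrib_left sum_distrib_right)
  finally show ?thesis .
qed

section \<open>Fluxes with prescribed divergence\<close>

definition dirac_density :: "('x \<Rightarrow> real) \<Rightarrow> 'x \<Rightarrow> 'x \<Rightarrow> real" where
  "dirac_density \<pi> z = (\<lambda>x. if x = z then 1 / \<pi> z else 0)"

lemma edge_flux_exists:
  fixes Q :: "'x::finite \<Rightarrow> 'x \<Rightarrow> real"
  assumes ms: "markov_setting Q \<pi>" and q: "Q a b > 0"
  shows "\<exists>F. dv Q F = (\<lambda>x. dirac_density \<pi> b x - dirac_density \<pi> a x)"
proof -
  have ab: "a \<noteq> b" using q ms unfolding markov_setting_def by auto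
  have pa: "\<pi> a > 0" and pb: "\<pi> b > 0" and rev: "\<pi> a * Q a b = \<pi> b * Q b a"
    using ms unfolding markov_setting_def by auto
  have qba: "Q b a = \<pi> a * Q a b / \<pi> b"
    using rev pb by (simp add: field_simps)
  define c where "c = 2 / (\<pi> a * Q a b)"
  define F where "F = (\<lambda>x y. if x = a \<and> y = b then c else (0::real))"
  have "dv Q F x = (1/2) * ((\<Sum>y\<in>UNIV. Q x y * F y x) - (\<Sum>y\<in>UNIV. Q x y * F x y))" for x
    unfolding dv_def by (simp add: algebra_simps sum_subtractf)
  moreover have "(\<Sum>y\<in>UNIV. Q x y * F y x) = (if x = b then Q b a * c else 0)" for x
    unfolding F_def by (auto simp: if_distrib cong: if_cong)
  moreover have "(\<Sum>y\<in>UNIV. Q x y * F x y) = (if x = a then Q a b * c else 0)" for x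
    unfolding F_def by (auto simp: if_distrib cong: if_cong)
  moreover have "(1/2) * (Q b a * c) = 1 / \<pi> b" and "(1/2) * (Q a b * c) = 1 / \<pi> a"
    using pa pb q qba unfolding c_def by (simp_all add: field_simps)
  ultimately have "dv Q F = (\<lambda>x. dirac_density \<pi> b x - dirac_density \<pi> a x)"
    using ab unfolding dirac_density_def by (auto simp: right_diff_distrib)
  then show ?thesis by blast
qed

(* Chain edge fluxes along a path of positive rates from w to z, which exists by irreducibility. *)
lemma transport_flux_exists:
  fixes Q :: "'x::finite \<Rightarrow> 'x \<Rightarrow> real"
  assumes ms: "markov_setting Q \<pi>"
  shows "\<exists>F. dv Q F = (\<lambda>x. dirac_density \<pi> z x - dirac_density \<pi> w x)"
proof -
  have "(w, z) \<in> {(a, b). Q a b > 0}\<^sup>*" using ms unfolding markov_setting_def by blast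
  then show ?thesis
  proof (induction rule: rtrancl_induct)
    case base
    show ?case by (rule exI[of _ "\<lambda>x y. 0"]) (simp add: dv_zero)
  next
    case (step y z)
    obtain F1 where "dv Q F1 = (\<lambda>x. dirac_density \<pi> y x - dirac_density \<pi> w x)"
      using step.IH by blast
    moreover obtain F2 where "dv Q F2 = (\<lambda>x. dirac_density \<pi> z x - dirac_density \<pi> y x)"
      using edge_flux_exists[OF ms] step.hyps(2) by blast
    ultimately have "dv Q (\<lambda>x y. F1 x y + F2 x y) = (\<lambda>x. dirac_density \<pi> z x - dirac_density \<pi> w x)"
      by (simp add: dv_add)
    then show ?case by blast
  qed
qed

definition transport_flux :: "('x::finite \<Rightarrow> 'x \<Rightarrow> real) \<Rightarrow> ('x \<Rightarrow> real) \<Rightarrow> 'x \<Rightarrow> 'x \<Rightarrow> 'x \<Rightarrow> 'x \<Rightarrow> real" where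
  "transport_flux Q \<pi> w z = (SOME F. dv Q F = (\<lambda>x. dirac_density \<pi> z x - dirac_density \<pi> w x))"

lemma dv_transport_flux:
  assumes "markov_setting Q \<pi>"
  shows "dv Q (transport_flux Q \<pi> w z) = (\<lambda>x. dirac_density \<pi> z x - dirac_density \<pi> w x)"
  unfolding transport_flux_def by (rule someI_ex[OF transport_flux_exists[OF assms]])

(* With delta_z = dirac_density pi z, both densities having mass one gives
   rho - 1 = sum_z sum_w (pi z rho z pi w) (delta_z - delta_w), with coefficients in [0, 1]. *)
definition density_flux :: "('x::finite \<Rightarrow> 'x \<Rightarrow> real) \<Rightarrow> ('x \<Rightarrow> real) \<Rightarrow> ('x \<Rightarrow> real) \<Rightarrow> 'x \<Rightarrow> 'x \<Rightarrow> real" where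
  "density_flux Q \<pi> \<rho> = (\<lambda>x y. \<Sum>z\<in>UNIV. \<Sum>w\<in>UNIV. (\<pi> z * \<rho> z * \<pi> w) * transport_flux Q \<pi> w z x y)"

lemma dv_density_flux:
  fixes Q :: "'x::finite \<Rightarrow> 'x \<Rightarrow> real"
  assumes ms: "markov_setting Q \<pi>" and P: "in_P \<pi> \<rho>"
  shows "dv Q (density_flux Q \<pi> \<rho>) = (\<lambda>x. \<rho> x - 1)"
proof
  fix x
  have pos: "\<pi> x > 0" and mass_\<pi>: "(\<Sum>w\<in>UNIV. \<pi> w) = 1"
    using ms unfolding markov_setting_def by auto
  have mass_\<rho>: "(\<Sum>z\<in>UNIV. \<pi> z * \<rho> z) = 1" using P unfolding in_P_def by auto
  have "dv Q (density_flux Q \<pi> \<rho>) x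
      = (\<Sum>z\<in>UNIV. \<Sum>w\<in>UNIV. \<pi> z * \<rho> z * \<pi> w * dirac_density \<pi> z x)
        - (\<Sum>z\<in>UNIV. \<Sum>w\<in>UNIV. \<pi> z * \<rho> z * \<pi> w * dirac_density \<pi> w x)"
    unfolding density_flux_def
    by (simp add: dv_sum dv_cmult dv_transport_flux[OF ms] algebra_simps sum_subtractf)
  also have "(\<Sum>z\<in>UNIV. \<Sum>w\<in>UNIV. \<pi> z * \<rho> z * \<pi> w * dirac_density \<pi> z x) = (\<Sum>w\<in>UNIV. \<rho> x * \<pi> w)"
  proof -
    have "\<pi> z * \<rho> z * \<pi> w * dirac_density \<pi> z x = (if z = x then \<rho> x * \<pi> w else 0)" for z w
      using pos unfolding dirac_density_def by auto
    then show ?thesis by (simp, subst sum.swap, simp)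
  qed
  also have "(\<Sum>z\<in>UNIV. \<Sum>w\<in>UNIV. \<pi> z * \<rho> z * \<pi> w * dirac_density \<pi> w x) = (\<Sum>z\<in>UNIV. \<pi> z * \<rho> z)"
  proof -
    have "\<pi> z * \<rho> z * \<pi> w * dirac_density \<pi> w x = (if w = x then \<pi> z * \<rho> z else 0)" for z w
      using pos unfolding dirac_density_def by auto
    then show ?thesis by simp
  qed
  finally show "dv Q (density_flux Q \<pi> \<rho>) x = \<rho> x - 1"
    using mass_\<pi> mass_\<rho> by (simp add: sum_distrib_left[symmetric])
qed
lemma abs_density_flux_le:
  fixes Q :: "'x::finite \<Rightarrow> 'x \<Rightarrow> real"
  assumes ms: "markov_setting Q \<pi>" and P: "in_P \<pi> \<rho>"
  shows "\<bar>density_flux Q \<pi> \<rho> x y\<bar> \<le> (\<Sum>z\<in>UNIV. \<Sum>w\<in>UNIV. \<bar>transport_flux Q \<pi> w z x y\<bar>)"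
proof -
  have pos: "\<pi> u > 0" for u using ms unfolding markov_setting_def by auto
  have mass_\<pi>: "(\<Sum>x\<in>UNIV. \<pi> x) = 1" using ms unfolding markov_setting_def by auto
  have mass_\<rho>: "(\<Sum>x\<in>UNIV. \<pi> x * \<rho> x) = 1" and nonneg: "\<rho> u \<ge> 0" for u
    using P unfolding in_P_def by auto
  have le1: "\<pi> u \<le> 1" for u
  proof -
    have "\<pi> u \<le> (\<Sum>x\<in>UNIV. \<pi> x)" by (rule member_le_sum) (auto simp: less_imp_le pos)
    then show ?thesis using mass_\<pi> by simp
  qed
  have le2: "\<pi> u * \<rho> u \<le> 1" for u
  proof -
    have "\<pi> u * \<rho> u \<le> (\<Sum>x\<in>UNIV. \<pi> x * \<rho> x)"
      by (rule member_le_sum) (auto simp: less_imp_le pos nonneg)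
    then show ?thesis using mass_\<rho> by simp
  qed
  have coeff: "0 \<le> \<pi> z * \<rho> z * \<pi> w \<and> \<pi> z * \<rho> z * \<pi> w \<le> 1" for z w
    using le1[of w] le2[of z] pos[of z] pos[of w] nonneg[of z] by (auto intro: mult_le_one)
  have "\<bar>density_flux Q \<pi> \<rho> x y\<bar>
      \<le> (\<Sum>z\<in>UNIV. \<Sum>w\<in>UNIV. \<bar>(\<pi> z * \<rho> z * \<pi> w) * transport_flux Q \<pi> w z x y\<bar>)"
    unfolding density_flux_def by (rule order.trans[OF sum_abs sum_mono]) (rule sum_abs)
  also have "\<dots> \<le> (\<Sum>z\<in>UNIV. \<Sum>w\<in>UNIV. \<bar>transport_flux Q \<pi> w z x y\<bar>)"
  proof (intro sum_mono)
    fix z w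
    have "\<bar>(\<pi> z * \<rho> z * \<pi> w) * transport_flux Q \<pi> w z x y\<bar>
        = (\<pi> z * \<rho> z * \<pi> w) * \<bar>transport_flux Q \<pi> w z x y\<bar>"
      using coeff[of z w] by (simp only: abs_mult[of "\<pi> z * \<rho> z * \<pi> w"] abs_of_nonneg)
    also have "\<dots> \<le> \<bar>transport_flux Q \<pi> w z x y\<bar>"
      using coeff[of z w] by (simp add: mult_left_le_one_le)
    finally show "\<bar>(\<pi> z * \<rho> z * \<pi> w) * transport_flux Q \<pi> w z x y\<bar> \<le> \<bar>transport_flux Q \<pi> w z x y\<bar>" .
  qed
  finally show ?thesis .
qed

lemma bounded_flux_exists:
  fixes Q :: "'x::finite \<Rightarrow> 'x \<Rightarrow> real"
  assumes "markov_setting Q \<pi>"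
  shows "\<exists>B. \<forall>\<rho>. in_P \<pi> \<rho> \<longrightarrow> (\<exists>m. dv Q m = (\<lambda>x. \<rho> x - 1) \<and> (\<forall>x y. \<bar>m x y\<bar> \<le> B x y))"
proof (rule exI[of _ "\<lambda>x y. \<Sum>z\<in>UNIV. \<Sum>w\<in>UNIV. \<bar>transport_flux Q \<pi> w z x y\<bar>"], intro allI impI)
  fix \<rho> assume "in_P \<pi> \<rho>"
  then show "\<exists>m. dv Q m = (\<lambda>x. \<rho> x - 1) \<and>
      (\<forall>x y. \<bar>m x y\<bar> \<le> (\<Sum>z\<in>UNIV. \<Sum>w\<in>UNIV. \<bar>transport_flux Q \<pi> w z x y\<bar>))"
    using dv_density_flux[OF assms] abs_density_flux_le[OF assms] by blast
qed

lemma theta_ge: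
  assumes th: "admissible_theta \<theta>" and c: "0 \<le> c" "c \<le> s" "c \<le> t"
  shows "c \<le> \<theta> s t"
proof -
  have mono: "\<And>s s' t. 0 \<le> s \<Longrightarrow> s \<le> s' \<Longrightarrow> 0 \<le> t \<Longrightarrow> \<theta> s t \<le> \<theta> s' t \<and> \<theta> t s \<le> \<theta> t s'"
    and diag: "\<theta> c c = c"
    using th c unfolding admissible_theta_def by auto
  have "\<theta> c c \<le> \<theta> s c" using mono[of c s c] c by simp
  also have "\<dots> \<le> \<theta> s t" using mono[of c t s] c by simp
  finally show ?thesis using diag by simp
qed

lemma alpha_le:
  assumes th: "admissible_theta \<theta>" and c: "0 \<le> c" "c \<le> s" "c \<le> t" and m: "m\<^sup>2 \<le> K * c"
  shows "alpha \<theta> s t m \<le> ennreal K"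
proof (cases "c = 0")
  case True
  then have "m = 0" using m by simp
  moreover have "0 \<le> \<theta> s t" using theta_ge[OF th, of 0 s t] c True by simp
  ultimately show ?thesis using c True unfolding alpha_def by auto
next
  case False
  have ge: "c \<le> \<theta> s t" by (rule theta_ge[OF th c])
  then have "alpha \<theta> s t m = ennreal (m\<^sup>2 / \<theta> s t)" using c False unfolding alpha_def by auto
  moreover have "m\<^sup>2 / \<theta> s t \<le> m\<^sup>2 / c" using ge c False by (intro divide_left_mono) auto
  moreover have "m\<^sup>2 / c \<le> K" using m c False by (simp add: divide_le_eq)
  ultimately show ?thesis by (simp add: ennreal_leI)
qed

lemma action_le:
  fixes Q :: "'x::finite \<Rightarrow> 'x \<Rightarrow> real"
  assumes Q: "\<And>x y. 0 \<le> Q x y" and \<pi>: "\<And>x. 0 \<le> \<pi> x" and K: "\<And>x y. 0 \<le> K x y"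
    and bound: "\<And>t x y. t \<in> {0..1} \<Longrightarrow> alpha \<theta> (\<rho> t x) (\<rho> t y) (m t x y) \<le> ennreal (K x y)"
  shows "action Q \<pi> \<theta> \<rho> m \<le> ennreal ((1/2) * (\<Sum>x\<in>UNIV. \<Sum>y\<in>UNIV. K x y * (Q x y * \<pi> x)))"
proof -
  let ?S = "\<Sum>x\<in>UNIV. \<Sum>y\<in>UNIV. K x y * (Q x y * \<pi> x)"
  have S: "0 \<le> ?S" using Q \<pi> K by (intro sum_nonneg) auto
  have pointwise: "(\<Sum>x\<in>UNIV. \<Sum>y\<in>UNIV. alpha \<theta> (\<rho> t x) (\<rho> t y) (m t x y) * ennreal (Q x y * \<pi> x))
      * indicator {0..1} t \<le> ennreal ?S * indicator {0..1} t" for t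
  proof (cases "t \<in> {0..1}")
    case True
    have "(\<Sum>x\<in>UNIV. \<Sum>y\<in>UNIV. alpha \<theta> (\<rho> t x) (\<rho> t y) (m t x y) * ennreal (Q x y * \<pi> x))
        \<le> (\<Sum>x\<in>UNIV. \<Sum>y\<in>UNIV. ennreal (K x y) * ennreal (Q x y * \<pi> x))"
      by (intro sum_mono mult_right_mono bound[OF True]) auto
    also have "\<dots> = ennreal ?S"
      using Q \<pi> K by (simp add: ennreal_mult[symmetric] sum_nonneg)
    finally show ?thesis using True by simp
  qed simp
  have "(\<integral>\<^sup>+ t \<in> {0..1}. (\<Sum>x\<in>UNIV. \<Sum>y\<in>UNIV. alpha \<theta> (\<rho> t x) (\<rho> t y) (m t x y) * ennreal (Q x y * \<pi> x)) \<partial>lborel)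
      \<le> (\<integral>\<^sup>+ t. ennreal ?S * indicator {0..1::real} t \<partial>lborel)"
    using pointwise by (intro nn_integral_mono) simp
  also have "\<dots> = ennreal ?S" by (simp add: nn_integral_cmult_indicator)
  finally have "action Q \<pi> \<theta> \<rho> m \<le> ennreal (1/2) * ennreal ?S"
    unfolding action_def by (rule mult_left_mono) simp
  also have "\<dots> = ennreal ((1/2) * ?S)" by (rule ennreal_mult[symmetric]) (auto simp: S)
  finally show ?thesis .
qed

section \<open>Time discretisation\<close>

lemma node_nonneg: "0 \<le> node N j"
  unfolding node_def by simp

lemma node_le_one: "N \<ge> 1 \<Longrightarrow> j \<le> N \<Longrightarrow> node N j \<le> 1"
  unfolding node_def by (simp add: divide_le_eq)

lemma node_mono: "N \<ge> 1 \<Longrightarrow> i \<le> j \<Longrightarrow> node N i \<le> node N j"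
  unfolding node_def by (simp add: divide_right_mono)

lemma node_times: "N \<ge> 1 \<Longrightarrow> node N i * real N = real i"
  unfolding node_def by simp

lemma cell_idx_cell:
  assumes N: "N \<ge> 1" and i: "i < N" and t1: "node N i \<le> t" and t2: "t < node N (Suc i)"
  shows "cell_idx N t = i"
proof -
  have Np: "real N > 0" using N by simp
  have a: "real i \<le> t * real N" using t1 Np unfolding node_def by (simp add: field_simps)
  have b: "t * real N < real i + 1" using t2 Np unfolding node_def by (simp add: field_simps)
  have c: "\<not> (t * real N \<ge> real N)" using b i by linarith
  have "\<lfloor>t * real N\<rfloor> = int i" by (rule floor_unique) (use a b in auto)
  then show ?thesis using c unfolding cell_idx_def by simp
qed

lemma cell_idx_node: "N \<ge> 1 \<Longrightarrow> i < N \<Longrightarrow> cell_idx N (node N i) = i"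
  by (rule cell_idx_cell) (auto simp: node_def divide_strict_right_mono)

lemma cell_idx_range:
  assumes N: "N \<ge> 1" and t: "0 \<le> t" "t \<le> 1"
  shows "cell_idx N t < N \<and> node N (cell_idx N t) \<le> t \<and> t \<le> node N (Suc (cell_idx N t))"
proof (cases "t * real N \<ge> real N")
  case True
  have Np: "real N > 0" using N by simp
  have "t * real N \<le> 1 * real N" using t Np by (intro mult_right_mono) auto
  then have "t * real N = 1 * real N" using True by simp
  then have "t = 1" using Np by simp
  then show ?thesis using N True unfolding cell_idx_def node_def by (auto simp: of_nat_diff)
next
  case False
  have Np: "real N > 0" using N by simp
  have f0: "\<lfloor>t * real N\<rfloor> \<ge> 0" using t Np by simp
  let ?i = "nat \<lfloor>t * real N\<rfloor>"
  have ri: "real ?i = of_int \<lfloor>t * real N\<rfloor>" using f0 by simp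
  have a: "real ?i \<le> t * real N" using ri by linarith
  have b: "t * real N < real ?i + 1" using ri by linarith
  have c: "?i < N" using False a by linarith
  have "node N ?i \<le> t" using a Np unfolding node_def by (simp add: field_simps)
  moreover have "t \<le> node N (Suc ?i)" using b Np unfolding node_def by (simp add: field_simps)
  ultimately show ?thesis using False c unfolding cell_idx_def by simp
qed

lemma interp_node:
  assumes N: "N \<ge> 1" and j: "j \<le> N"
  shows "interp N \<rho> (node N j) = \<rho> (node N j)"
proof (cases "j < N")
  case True
  then show ?thesis using N unfolding interp_def Let_def by (simp add: cell_idx_node node_times)
next
  case False
  then have j: "j = N" using j by simp
  have "cell_idx N (node N N) = N - 1" using N unfolding cell_idx_def node_def by simp
  moreover have "Suc (N - 1) = N" using N by simp
  ultimately show ?thesis using N j unfolding interp_def Let_def by (simp add: node_times of_nat_diff)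
qed

lemma interp_cell:
  assumes N: "N \<ge> 1" and i: "i < N" and t1: "node N i \<le> t" and t2: "t \<le> node N (Suc i)"
  shows "interp N \<rho> t x = (1 - (t * real N - real i)) * \<rho> (node N i) x + (t * real N - real i) * \<rho> (node N (Suc i)) x"
proof (cases "t = node N (Suc i)")
  case True
  have "interp N \<rho> t x = \<rho> (node N (Suc i)) x" using True interp_node[OF N, of "Suc i" \<rho>] i by simp
  moreover have "t * real N - real i = 1" using True N by (simp add: node_times)
  ultimately show ?thesis by simp
next
  case False
  then have "cell_idx N t = i" using cell_idx_cell[OF N i t1] t2 by simp
  then show ?thesis unfolding interp_def Let_def by simp
qed

lemma continuous_on_interp:
  assumes N: "N \<ge> 1"
  shows "continuous_on {0..1} (\<lambda>t. interp N \<rho> t x)"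
proof -
  have eq: "{0..1} = (\<Union>i\<in>{..<N}. {node N i..node N (Suc i)})"
  proof
    show "{0..1} \<subseteq> (\<Union>i\<in>{..<N}. {node N i..node N (Suc i)})"
      using cell_idx_range[OF N] by fastforce
    show "(\<Union>i\<in>{..<N}. {node N i..node N (Suc i)}) \<subseteq> {0..1}"
    proof
      fix t assume "t \<in> (\<Union>i\<in>{..<N}. {node N i..node N (Suc i)})"
      then obtain i where "i < N" "node N i \<le> t" "t \<le> node N (Suc i)" by auto
      moreover have "node N (Suc i) \<le> 1" using \<open>i < N\<close> by (intro node_le_one N) simp
      ultimately show "t \<in> {0..1}" using node_nonneg[of N i] by auto
    qed
  qed
  show ?thesis
    unfolding eq
  proof (rule continuous_on_closed_Union)
    fix i assume "i \<in> {..<N}"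
    then have i: "i < N" by simp
    have "continuous_on {node N i..node N (Suc i)}
       (\<lambda>t. (1 - (t * real N - real i)) * \<rho> (node N i) x + (t * real N - real i) * \<rho> (node N (Suc i)) x)"
      by (intro continuous_intros)
    then show "continuous_on {node N i..node N (Suc i)} (\<lambda>t. interp N \<rho> t x)"
      by (rule continuous_on_cong[THEN iffD1, rotated -1]) (auto simp: interp_cell[OF N i])
  qed auto
qed

lemma integral_cell_affine:
  assumes N: "N \<ge> 1" and i: "i < N"
    and f: "\<And>s. s \<in> cell N i \<Longrightarrow> f s = (1 - (s * real N - real i)) * A + (s * real N - real i) * B"
  shows "(LINT s:cell N i|lborel. f s) = (A + B) / (2 * real N)"
proof -
  define g where "g = (\<lambda>s. (1 - (s * real N - real i)) * A + (s * real N - real i) * B)"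
  define c where "c = (B - A) / (2 * real N)"
  define G where "G = (\<lambda>s. A * s + c * (s * real N - real i)^2)"
  have Np: "real N > 0" using N by simp
  have "(LINT s:cell N i|lborel. f s) = (LINT s:cell N i|lborel. g s)"
    by (rule set_lebesgue_integral_cong) (auto simp: f g_def cell_def)
  also have "\<dots> = (LINT s:{node N i..node N (Suc i)}|lborel. g s)"
    unfolding cell_def
  proof (rule set_integral_cong_set)
    show "set_borel_measurable lborel {node N i..node N (Suc i)} g"
      unfolding set_borel_measurable_def g_def by measurable
    show "set_borel_measurable lborel {node N i..<node N (Suc i)} g"
      unfolding set_borel_measurable_def g_def by measurable
    show "AE x in lborel. (x \<in> {node N i..node N (Suc i)}) = (x \<in> {node N i..<node N (Suc i)})"
      using AE_lborel_singleton[of "node N (Suc i)"] by eventually_elim auto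
  qed
  also have "\<dots> = G (node N (Suc i)) - G (node N i)"
    unfolding set_lebesgue_integral_def
  proof (rule integral_FTC_atLeastAtMost)
    show "node N i \<le> node N (Suc i)" by (rule node_mono[OF N]) simp
    show "continuous_on {node N i..node N (Suc i)} g" unfolding g_def by (intro continuous_intros)
    fix s
    show "(G has_vector_derivative g s) (at s within {node N i..node N (Suc i)})"
      unfolding G_def g_def has_real_derivative_iff_has_vector_derivative[symmetric]
      using Np by (auto intro!: derivative_eq_intros simp: c_def field_simps power2_eq_square)
  qed
  also have "\<dots> = (A + B) / (2 * real N)"
    unfolding G_def c_def using Np by (simp add: node_times) (simp add: node_def field_simps power2_eq_square)
  finally show ?thesis .
qed

lemma avg1_affine:
  assumes N: "N \<ge> 1" and t: "0 \<le> t" "t \<le> 1"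
    and f: "\<And>s. s \<in> cell N (cell_idx N t) \<Longrightarrow>
      f s = (1 - (s * real N - real (cell_idx N t))) * A + (s * real N - real (cell_idx N t)) * B"
  shows "avg1 N f t = (A + B) / 2"
proof -
  have "cell_idx N t < N" using cell_idx_range[OF N t] by simp
  then show ?thesis unfolding avg1_def using integral_cell_affine[OF N _ f] N by simp
qed

lemma interp_in_V1n:
  assumes N: "N \<ge> 1"
  shows "V1n N (interp N \<rho>)"
  unfolding V1n_def
proof (intro conjI allI impI)
  fix x show "continuous_on {0..1} (\<lambda>t. interp N \<rho> t x)" by (rule continuous_on_interp[OF N])
next
  fix i x assume i: "i < N"
  show "\<exists>a b. \<forall>t\<in>cell N i. interp N \<rho> t x = a + b * t"
  proof (intro exI ballI)
    fix t assume "t \<in> cell N i"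
    then have "interp N \<rho> t x = (1 - (t * real N - real i)) * \<rho> (node N i) x
        + (t * real N - real i) * \<rho> (node N (Suc i)) x"
      by (intro interp_cell[OF N i]) (auto simp: cell_def)
    then show "interp N \<rho> t x = ((1 + real i) * \<rho> (node N i) x - real i * \<rho> (node N (Suc i)) x)
        + (real N * (\<rho> (node N (Suc i)) x - \<rho> (node N i) x)) * t"
      by (simp add: algebra_simps)
  qed
qed

lemma avg_e_in_V0e:
  assumes N: "N \<ge> 1"
  shows "V0e N (avg_e N m)"
  unfolding V0e_def
proof (intro allI impI ballI)
  fix i t assume i: "i < N" and t: "t \<in> cell N i"
  have "cell_idx N t = cell_idx N (node N i)"
    using t cell_idx_node[OF N i] by (auto simp: cell_def intro: cell_idx_cell[OF N i])
  then show "avg_e N m t = avg_e N m (node N i)"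
    unfolding avg_e_def avg1_def by simp
qed

lemma avg_e_avg_e:
  assumes N: "N \<ge> 1" and t: "0 \<le> t" "t \<le> 1"
  shows "avg_e N (avg_e N m) t = avg_e N m t"
proof (intro ext)
  fix x y
  have i: "cell_idx N t < N" using cell_idx_range[OF N t] by simp
  have "avg_e N (avg_e N m) t x y = (avg_e N m t x y + avg_e N m t x y) / 2"
    unfolding avg_e_def[of N "avg_e N m"]
  proof (rule avg1_affine[OF N t])
    fix s assume "s \<in> cell N (cell_idx N t)"
    then have "cell_idx N s = cell_idx N t" by (intro cell_idx_cell[OF N i]) (auto simp: cell_def)
    then show "avg_e N m s x y = (1 - (s * real N - real (cell_idx N t))) * avg_e N m t x y
        + (s * real N - real (cell_idx N t)) * avg_e N m t x y"
      unfolding avg_e_def avg1_def by (simp add: algebra_simps)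
  qed
  then show "avg_e N (avg_e N m) t x y = avg_e N m t x y" by simp
qed

lemma avg_n_interp:
  assumes N: "N \<ge> 1" and t: "0 \<le> t" "t \<le> 1"
  shows "avg_n N (interp N \<rho>) t x
    = (\<rho> (node N (cell_idx N t)) x + \<rho> (node N (Suc (cell_idx N t))) x) / 2"
proof -
  have i: "cell_idx N t < N" using cell_idx_range[OF N t] by simp
  show ?thesis unfolding avg_n_def
    by (rule avg1_affine[OF N t]) (rule interp_cell[OF N i], auto simp: cell_def)
qed

lemma set_borel_measurable_continuous_on:
  fixes f :: "real \<Rightarrow> real"
  shows "continuous_on {a..b} f \<Longrightarrow> set_borel_measurable lborel {a..b} f"
  using borel_measurable_continuous_on_indicator[of "{a..b}" f]
  unfolding set_borel_measurable_def by simp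

lemma classical_solution_in_CE:
  fixes Q :: "'x::finite \<Rightarrow> 'x \<Rightarrow> real"
  assumes rev: "\<And>x y. \<pi> x * Q x y = \<pi> y * Q y x"
    and \<rho>': "\<And>t x. t \<in> {0..1} \<Longrightarrow> ((\<lambda>s. \<rho> s x) has_real_derivative \<rho>' t x) (at t within {0..1})"
    and cont_\<rho>': "\<And>x. continuous_on {0..1} (\<lambda>t. \<rho>' t x)"
    and cont_m: "\<And>x y. continuous_on {0..1} (\<lambda>t. m t x y)"
    and continuity_eq: "\<And>t x. t \<in> {0..1} \<Longrightarrow> \<rho>' t x + dv Q (m t) x = 0"
  shows "in_CE Q \<pi> (\<rho> 0) (\<rho> 1) \<rho> m"
proof -
  have cont_\<rho>: "continuous_on {0..1} (\<lambda>t. \<rho> t x)" for x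
    using \<rho>' DERIV_continuous continuous_on_eq_continuous_within by blast
  have weak_form: "set_integrable lborel {0..1} f \<and> (LINT t:{0..1}|lborel. f t)
      = ip_pi \<pi> (\<phi> 1) (\<rho> 1) - ip_pi \<pi> (\<phi> 0) (\<rho> 0)"
    if C1: "C1_test \<phi> \<phi>'" and f_def: "f = (\<lambda>t. ip_pi \<pi> (\<phi>' t) (\<rho> t) + ip_Q Q \<pi> (grad (\<phi> t)) (m t))"
    for \<phi> \<phi>' f
  proof -
    have \<phi>': "((\<lambda>s. \<phi> s x) has_real_derivative \<phi>' t x) (at t within {0..1})" if "t \<in> {0..1}" for t x
      using C1 that unfolding C1_test_def by blast
    have cont_\<phi>': "continuous_on {0..1} (\<lambda>t. \<phi>' t x)" for x
      using C1 unfolding C1_test_def by blast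
    have cont_\<phi>: "continuous_on {0..1} (\<lambda>t. \<phi> t x)" for x
      using \<phi>' DERIV_continuous continuous_on_eq_continuous_within by blast
    have cont_f: "continuous_on {0..1} f"
      unfolding f_def ip_pi_def ip_Q_def grad_def
      by (intro continuous_intros cont_\<rho> cont_\<rho>' cont_\<phi> cont_\<phi>' cont_m)
    have "f t = (\<Sum>x\<in>UNIV. (\<phi>' t x * \<rho> t x + \<phi> t x * \<rho>' t x) * \<pi> x)" if "t \<in> {0..1}" for t
    proof -
      have "dv Q (m t) x = - \<rho>' t x" for x using continuity_eq[OF that, of x] by simp
      then show ?thesis
        unfolding f_def ip_Q_grad[OF rev] ip_pi_def by (simp add: algebra_simps sum.distrib sum_negf)
    qed
    then have deriv: "((\<lambda>s. ip_pi \<pi> (\<phi> s) (\<rho> s)) has_vector_derivative f t) (at t within {0..1})"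
      if "0 \<le> t" "t \<le> 1" for t
      using that unfolding has_real_derivative_iff_has_vector_derivative[symmetric] ip_pi_def
      by (auto intro!: DERIV_sum derivative_eq_intros \<phi>' \<rho>' simp: algebra_simps)
    have "(LINT t:{0..1}|lborel. f t) = ip_pi \<pi> (\<phi> 1) (\<rho> 1) - ip_pi \<pi> (\<phi> 0) (\<rho> 0)"
      using integral_FTC_atLeastAtMost[OF _ deriv cont_f] unfolding set_lebesgue_integral_def by simp
    then show ?thesis using borel_integrable_atLeastAtMost'[OF cont_f] by simp
  qed
  show ?thesis
    unfolding in_CE_def
    using weak_form set_borel_measurable_continuous_on cont_\<rho> cont_m by blast
qed

section \<open>The quadratic curve\<close>

definition quadratic_path :: "('x \<Rightarrow> real) \<Rightarrow> real \<Rightarrow> 'x \<Rightarrow> real" where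
  "quadratic_path \<rho>A t x = \<rho>A x + t\<^sup>2 * (1 - \<rho>A x)"

definition linear_flux :: "('x \<Rightarrow> 'x \<Rightarrow> real) \<Rightarrow> real \<Rightarrow> 'x \<Rightarrow> 'x \<Rightarrow> real" where
  "linear_flux m0 t x y = 2 * t * m0 x y"

lemma quadratic_path_0: "quadratic_path \<rho>A 0 = \<rho>A"
  and quadratic_path_1: "quadratic_path \<rho>A 1 = one_dens"
  by (auto simp: quadratic_path_def one_dens_def)

lemma continuous_on_quadratic_path: "continuous_on S (\<lambda>t. quadratic_path \<rho>A t x)"
  unfolding quadratic_path_def by (intro continuous_intros)

lemma quadratic_path_ge:
  assumes "\<rho>A x \<ge> 0" and "0 \<le> t" "t \<le> 1"
  shows "t\<^sup>2 \<le> quadratic_path \<rho>A t x"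
proof -
  have "0 \<le> (1 - t\<^sup>2) * \<rho>A x" using assms by (simp add: power_le_one)
  then show ?thesis unfolding quadratic_path_def by (simp add: algebra_simps)
qed

lemma quadratic_path_in_CE:
  fixes Q :: "'x::finite \<Rightarrow> 'x \<Rightarrow> real"
  assumes rev: "\<And>x y. \<pi> x * Q x y = \<pi> y * Q y x" and m0: "dv Q m0 = (\<lambda>x. \<rho>A x - 1)"
  shows "in_CE Q \<pi> \<rho>A one_dens (quadratic_path \<rho>A) (linear_flux m0)"
proof -
  have "in_CE Q \<pi> (quadratic_path \<rho>A 0) (quadratic_path \<rho>A 1) (quadratic_path \<rho>A) (linear_flux m0)"
  proof (rule classical_solution_in_CE[OF rev, where \<rho>'="\<lambda>t x. 2 * t * (1 - \<rho>A x)"])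
    show "((\<lambda>s. quadratic_path \<rho>A s x) has_real_derivative 2 * t * (1 - \<rho>A x)) (at t within {0..1})"
      for t x
      unfolding quadratic_path_def by (auto intro!: derivative_eq_intros)

  qed (auto simp: linear_flux_def dv_cmult m0 algebra_simps intro!: continuous_intros)
  then show ?thesis by (simp add: quadratic_path_0 quadratic_path_1)
qed

lemma action_quadratic_path_le:
  fixes Q :: "'x::finite \<Rightarrow> 'x \<Rightarrow> real"
  assumes th: "admissible_theta \<theta>" and Q: "\<And>x y. 0 \<le> Q x y" and \<pi>: "\<And>x. 0 \<le> \<pi> x"
    and \<rho>A: "\<And>x. 0 \<le> \<rho>A x" and B: "\<And>x y. \<bar>m0 x y\<bar> \<le> B x y"
  shows "action Q \<pi> \<theta> (quadratic_path \<rho>A) (linear_flux m0)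
    \<le> ennreal ((1/2) * (\<Sum>x\<in>UNIV. \<Sum>y\<in>UNIV. 4 * (B x y)\<^sup>2 * (Q x y * \<pi> x)))"
proof (rule action_le[OF Q \<pi>])
  fix t x y assume t: "t \<in> {0..1::real}"
  have "(linear_flux m0 t x y)\<^sup>2 = 4 * (m0 x y)\<^sup>2 * t\<^sup>2"
    unfolding linear_flux_def by (simp add: power_mult_distrib)
  also have "\<dots> \<le> 4 * (B x y)\<^sup>2 * t\<^sup>2"
    using power_mono[OF B[of x y] abs_ge_zero, of 2] by (simp add: mult_right_mono)
  finally show "alpha \<theta> (quadratic_path \<rho>A t x) (quadratic_path \<rho>A t y) (linear_flux m0 t x y)
      \<le> ennreal (4 * (B x y)\<^sup>2)"
    using t quadratic_path_ge[of \<rho>A, OF \<rho>A] by (intro alpha_le[OF th]) auto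
qed simp

lemma avg_e_linear_flux:
  assumes N: "N \<ge> 1" and t: "0 \<le> t" "t \<le> 1"
  shows "avg_e N (linear_flux m0) t
    = (\<lambda>x y. (node N (cell_idx N t) + node N (Suc (cell_idx N t))) * m0 x y)"
proof (intro ext)
  fix x y
  have "avg_e N (linear_flux m0) t x y
      = (2 * node N (cell_idx N t) * m0 x y + 2 * node N (Suc (cell_idx N t)) * m0 x y) / 2"
    unfolding avg_e_def
  proof (rule avg1_affine[OF N t])
    show "linear_flux m0 s x y = (1 - (s * real N - real (cell_idx N t))) * (2 * node N (cell_idx N t) * m0 x y)
        + (s * real N - real (cell_idx N t)) * (2 * node N (Suc (cell_idx N t)) * m0 x y)" for s
      unfolding linear_flux_def node_def using N by (simp add: field_simps)
  qed
  then show "avg_e N (linear_flux m0) t x y = (node N (cell_idx N t) + node N (Suc (cell_idx N t))) * m0 x y"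
    by (simp add: algebra_simps)
qed

lemma quadratic_path_in_CEh:
  fixes Q :: "'x::finite \<Rightarrow> 'x \<Rightarrow> real"
  assumes N: "N \<ge> 1" and m0: "dv Q m0 = (\<lambda>x. \<rho>A x - 1)"
  shows "in_CEh Q N \<rho>A one_dens (interp N (quadratic_path \<rho>A)) (avg_e N (linear_flux m0))"
  unfolding in_CEh_def
proof (intro conjI allI impI)
  show "interp N (quadratic_path \<rho>A) (node N 0) = \<rho>A"
    using interp_node[OF N, of 0 "quadratic_path \<rho>A"] by (simp add: node_def quadratic_path_0)
  show "interp N (quadratic_path \<rho>A) (node N N) = one_dens"
    using interp_node[OF N, of N "quadratic_path \<rho>A"] N by (simp add: node_def quadratic_path_1)
next
  fix i x assume i: "i < N"
  have "avg_e N (linear_flux m0) (node N i) = (\<lambda>x y. (node N i + node N (Suc i)) * m0 x y)"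
    using avg_e_linear_flux[OF N node_nonneg node_le_one[OF N less_imp_le[OF i]]] cell_idx_node[OF N i]
    by simp
  then have "dv Q (avg_e N (linear_flux m0) (node N i)) x = (node N i + node N (Suc i)) * (\<rho>A x - 1)"
    by (simp add: dv_cmult m0)
  moreover have "interp N (quadratic_path \<rho>A) (node N i) = quadratic_path \<rho>A (node N i)"
    and "interp N (quadratic_path \<rho>A) (node N (Suc i)) = quadratic_path \<rho>A (node N (Suc i))"
    using i by (simp_all add: interp_node[OF N])
  moreover have "(quadratic_path \<rho>A (node N (Suc i)) x - quadratic_path \<rho>A (node N i) x) / (1 / real N)
      = (node N i + node N (Suc i)) * (1 - \<rho>A x)"
    using N unfolding quadratic_path_def node_def by (simp add: field_simps power2_eq_square)
  ultimately show "(interp N (quadratic_path \<rho>A) (node N (Suc i)) x - interp N (quadratic_path \<rho>A) (node N i) x)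
      / (1 / real N) + dv Q (avg_e N (linear_flux m0) (node N i)) x = 0"
    by (simp add: algebra_simps)
qed (use N interp_in_V1n avg_e_in_V0e in auto)

lemma action_h_quadratic_path_le:
  fixes Q :: "'x::finite \<Rightarrow> 'x \<Rightarrow> real"
  assumes N: "N \<ge> 1" and th: "admissible_theta \<theta>" and Q: "\<And>x y. 0 \<le> Q x y"
    and \<pi>: "\<And>x. 0 \<le> \<pi> x" and \<rho>A: "\<And>x. 0 \<le> \<rho>A x" and B: "\<And>x y. \<bar>m0 x y\<bar> \<le> B x y"
  shows "action_h Q \<pi> \<theta> N (interp N (quadratic_path \<rho>A)) (avg_e N (linear_flux m0))
    \<le> ennreal ((1/2) * (\<Sum>x\<in>UNIV. \<Sum>y\<in>UNIV. 4 * (B x y)\<^sup>2 * (Q x y * \<pi> x)))"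
  unfolding action_h_def
proof (rule action_le[OF Q \<pi>])
  fix t x y assume "t \<in> {0..1::real}"
  then have t: "0 \<le> t" "t \<le> 1" by auto
  define a where "a = node N (cell_idx N t)"
  define b where "b = node N (Suc (cell_idx N t))"
  have "cell_idx N t < N" using cell_idx_range[OF N t] by simp
  then have "a \<le> 1" and "b \<le> 1"
    unfolding a_def b_def by (simp_all add: node_le_one[OF N])
  have "0 \<le> a" and "0 \<le> b" unfolding a_def b_def by (simp_all add: node_nonneg)
  have avg_\<rho>: "(a\<^sup>2 + b\<^sup>2) / 2 \<le> avg_n N (interp N (quadratic_path \<rho>A)) t z" for z
    using quadratic_path_ge[of \<rho>A z a] quadratic_path_ge[of \<rho>A z b] \<rho>A[of z]
      \<open>0 \<le> a\<close> \<open>a \<le> 1\<close> \<open>0 \<le> b\<close> \<open>b \<le> 1\<close>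
    unfolding avg_n_interp[OF N t] a_def[symmetric] b_def[symmetric] by simp
  have "(avg_e N (avg_e N (linear_flux m0)) t x y)\<^sup>2 = (a + b)\<^sup>2 * (m0 x y)\<^sup>2"
    unfolding avg_e_avg_e[OF N t] avg_e_linear_flux[OF N t] a_def b_def by (simp add: power_mult_distrib)
  also have "\<dots> \<le> (2 * (a\<^sup>2 + b\<^sup>2)) * (B x y)\<^sup>2"
  proof (rule mult_mono)
    show "(a + b)\<^sup>2 \<le> 2 * (a\<^sup>2 + b\<^sup>2)"
      using sum_squares_ge_zero[of "a - b" 0] by (simp add: power2_eq_square algebra_simps)
    show "(m0 x y)\<^sup>2 \<le> (B x y)\<^sup>2"
      using power_mono[OF B[of x y] abs_ge_zero, of 2] by simp
  qed simp_all
  finally show "alpha \<theta> (avg_n N (interp N (quadratic_path \<rho>A)) t x)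
      (avg_n N (interp N (quadratic_path \<rho>A)) t y) (avg_e N (avg_e N (linear_flux m0)) t x y)
      \<le> ennreal (4 * (B x y)\<^sup>2)"
    by (intro alpha_le[OF th _ avg_\<rho> avg_\<rho>]) (simp_all add: algebra_simps)
qed simp

theorem proposition3p3:
  fixes Q :: "'x::finite \<Rightarrow> 'x \<Rightarrow> real" and \<pi> :: "'x \<Rightarrow> real"
    and \<theta> :: "real \<Rightarrow> real \<Rightarrow> real"
  assumes "markov_setting Q \<pi>" and "admissible_theta \<theta>"
  shows "\<exists>C::real. \<forall>\<rho>A. in_P \<pi> \<rho>A \<longrightarrow>
    (\<exists>\<rho> m. in_CE Q \<pi> \<rho>A one_dens \<rho> m \<and>
       (\<forall>x. continuous_on {0..1} (\<lambda>t. \<rho> t x)) \<and>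
       action Q \<pi> \<theta> \<rho> m \<le> ennreal C \<and>
       (\<forall>N::nat. N \<ge> 1 \<longrightarrow>
          in_CEh Q N \<rho>A one_dens (interp N \<rho>) (avg_e N m) \<and>
          action_h Q \<pi> \<theta> N (interp N \<rho>) (avg_e N m) \<le> ennreal C))"
proof -
  have Q: "\<And>x y. 0 \<le> Q x y" and \<pi>: "\<And>x. 0 \<le> \<pi> x" and rev: "\<And>x y. \<pi> x * Q x y = \<pi> y * Q y x"
    using assms(1) unfolding markov_setting_def by (auto simp: less_imp_le)
  obtain B where B: "\<And>\<rho>A. in_P \<pi> \<rho>A \<Longrightarrow> \<exists>m0. dv Q m0 = (\<lambda>x. \<rho>A x - 1) \<and> (\<forall>x y. \<bar>m0 x y\<bar> \<le> B x y)"
    using bounded_flux_exists[OF assms(1)] by blast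
  define C where "C = (1/2) * (\<Sum>x\<in>UNIV. \<Sum>y\<in>UNIV. 4 * (B x y)\<^sup>2 * (Q x y * \<pi> x))"
  show ?thesis
  proof (intro exI[of _ C] allI impI, goal_cases)
    case (1 \<rho>A)
    then have \<rho>A: "\<And>x. 0 \<le> \<rho>A x" unfolding in_P_def by simp
    obtain m0 where m0: "dv Q m0 = (\<lambda>x. \<rho>A x - 1)" and bound: "\<And>x y. \<bar>m0 x y\<bar> \<le> B x y"
      using B[OF 1] by blast
    show ?case
    proof (intro exI[of _ "quadratic_path \<rho>A"] exI[of _ "linear_flux m0"] conjI allI impI)
      show "in_CE Q \<pi> \<rho>A one_dens (quadratic_path \<rho>A) (linear_flux m0)"
        by (rule quadratic_path_in_CE[OF rev m0])
      show "continuous_on {0..1} (\<lambda>t. quadratic_path \<rho>A t x)" for x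
        by (rule continuous_on_quadratic_path)
      show "action Q \<pi> \<theta> (quadratic_path \<rho>A) (linear_flux m0) \<le> ennreal C"
        unfolding C_def by (rule action_quadratic_path_le[OF assms(2) Q \<pi> \<rho>A bound])
      fix N :: nat assume N: "N \<ge> 1"
      show "in_CEh Q N \<rho>A one_dens (interp N (quadratic_path \<rho>A)) (avg_e N (linear_flux m0))"
        by (rule quadratic_path_in_CEh[OF N m0])
      show "action_h Q \<pi> \<theta> N (interp N (quadratic_path \<rho>A)) (avg_e N (linear_flux m0)) \<le> ennreal C"
        unfolding C_def by (rule action_h_quadratic_path_le[OF N assms(2) Q \<pi> \<rho>A bound])
    qed
  qed
qed

end
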